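(* Let $G=\mathbb{R}\ltimes\mathbb{R}^2$, where $t\in\mathbb{R}$ acts on $\mathbb{R}^2$ by rotation through angle $2\pi t$. Let $\varrho=\begin{bmatrix}1&0\\0&-1\end{bmatrix}$ and define $\varphi(t,x)=(-t,2\varrho x)$ for $t\in\mathbb{R}$, $x\in\mathbb{R}^2$. Then $\varphi$ is a continuous automorphism of $G$ with $R(\varphi)=1$, and the automorphism $\varphi_1$ it induces on $G/Z(G)\cong \mathrm{SO}(2,\mathbb{R})\ltimes\mathbb{R}^2$ (standard action) also satisfies $R(\varphi_1)=1$. Consequently neither $\mathbb{R}\ltimes\mathbb{R}^2$ nor $\mathrm{SO}(2,\mathbb{R})\ltimes\mathbb{R}^2$ (with these actions) has the topological $R_\infty$-property.
   Context: For an automorphism $\varphi$ of a group $G$, the $\varphi$-twisted conjugacy classes are the equivalence classes of the relation $x\sim_\varphi y$ iff $y=gx\varphi(g)^{-1}$ for some $g\in G$; $R(\varphi)\in\mathbb{N}\cup\{\infty\}$ is their number. $Z(G)$ is the center of $G$ (here the subgroup $\{(k,0):k\in\mathbb{Z}\}$). A topological group $G$ has the topological $R_\infty$-property if $R(\varphi)=\infty$ for every automorphism $\varphi$ of $G$ that is a homeomorphism. *)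

theory Defs
  imports "HOL-Analysis.Analysis" "HOL-Algebra.Algebra"
begin

definition twisted_rel :: "('a, 'b) monoid_scheme \<Rightarrow> ('a \<Rightarrow> 'a) \<Rightarrow> ('a \<times> 'a) set" where
  "twisted_rel G \<phi> = {(x, y). x \<in> carrier G \<and> y \<in> carrier G \<and>
      (\<exists>g \<in> carrier G. y = g \<otimes>\<^bsub>G\<^esub> x \<otimes>\<^bsub>G\<^esub> inv\<^bsub>G\<^esub> (\<phi> g))}"

definition twisted_classes :: "('a, 'b) monoid_scheme \<Rightarrow> ('a \<Rightarrow> 'a) \<Rightarrow> 'a set set" where
  "twisted_classes G \<phi> = carrier G // twisted_rel G \<phi>"

definition reidemeister :: "('a, 'b) monoid_scheme \<Rightarrow> ('a \<Rightarrow> 'a) \<Rightarrow> enat" where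
  "reidemeister G \<phi> = (if finite (twisted_classes G \<phi>) then enat (card (twisted_classes G \<phi>)) else \<infinity>)"

definition group_center :: "('a, 'b) monoid_scheme \<Rightarrow> 'a set" where
  "group_center G = {z \<in> carrier G. \<forall>g \<in> carrier G. z \<otimes>\<^bsub>G\<^esub> g = g \<otimes>\<^bsub>G\<^esub> z}"

definition top_R_infty :: "('a, 'b) monoid_scheme \<Rightarrow> 'a topology \<Rightarrow> bool" where
  "top_R_infty G T \<longleftrightarrow> (\<forall>\<phi>. \<phi> \<in> iso G G \<and> homeomorphic_map T T \<phi> \<longrightarrow> reidemeister G \<phi> = \<infinity>)"

definition rot :: "real \<Rightarrow> real^2^2" where
  "rot t = vector [vector [cos (2*pi*t), - sin (2*pi*t)], vector [sin (2*pi*t), cos (2*pi*t)]]"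

definition rho :: "real^2^2" where
  "rho = vector [vector [1, 0], vector [0, -1]]"

definition RR2 :: "(real \<times> (real^2)) monoid" where
  "RR2 = \<lparr>carrier = UNIV, mult = (\<lambda>(t, x) (s, y). (t + s, x + rot t *v y)), one = (0, 0)\<rparr>"

definition SO2 :: "(real^2^2) set" where
  "SO2 = {A. orthogonal_matrix A \<and> det A = 1}"

definition SO2R2 :: "((real^2^2) \<times> (real^2)) monoid" where
  "SO2R2 = \<lparr>carrier = SO2 \<times> UNIV, mult = (\<lambda>(A, x) (B, y). (A ** B, x + A *v y)), one = (mat 1, 0)\<rparr>"

text \<open>The quotient map G -> G/Z(G) = SO(2) semidirect R^2.\<close>
definition proj :: "real \<times> (real^2) \<Rightarrow> (real^2^2) \<times> (real^2)" where
  "proj = (\<lambda>(t, x). (rot t, x))"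

definition phi :: "real \<times> (real^2) \<Rightarrow> real \<times> (real^2)" where
  "phi = (\<lambda>(t, x). (- t, 2 *\<^sub>R (rho *v x)))"

end

theory Submission
  imports Defs
begin

text \<open>
  Twisted conjugation by \<open>g = (t, a)\<close> sends \<open>(s, b)\<close> to
  \<open>(2 t + s, a + rot t b - 2 rot (2 t + s) \<rho> a)\<close>. Choosing \<open>t\<close> reaches any first coordinate
  \<open>u\<close>, and then \<open>a \<mapsto> a - 2 M a\<close> with \<open>M = rot u \<rho>\<close> must be onto. It is, because \<open>M\<close> is a
  reflection: \<open>M\<^sup>2 = 1\<close> gives \<open>(1 - 2 M)(1 + 2 M) = -3\<close>. So all of \<open>G\<close> is one twisted class
  and \<open>R(\<phi>) = 1\<close>. A single twisted class maps onto a single twisted class under any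
  surjective homomorphism intertwining the automorphisms, which gives \<open>R(\<phi>\<^sub>1) = 1\<close>.
\<close>

lemma reidemeister_eq_1_if_twisted_rel_total:
  assumes "group G" and "twisted_rel G f = carrier G \<times> carrier G"
  shows "reidemeister G f = 1"
proof -
  have "carrier G \<noteq> {}"
    using monoid.one_closed[OF group.is_monoid[OF assms(1)]] by blast
  then have "twisted_classes G f = {carrier G}"
    using assms(2) unfolding twisted_classes_def quotient_def by auto
  then show ?thesis
    by (simp add: reidemeister_def one_enat_def)
qed

lemma twisted_rel_total_image:
  assumes "group G" "group H" "h \<in> hom G H" and onto: "h ` carrier G = carrier H"
    and "f \<in> carrier G \<rightarrow> carrier G" and intertwine: "\<And>g. g \<in> carrier G \<Longrightarrow> k (h g) = h (f g)"
    and total: "twisted_rel G f = carrier G \<times> carrier G"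
  shows "twisted_rel H k = carrier H \<times> carrier H"
proof -
  interpret gh: group_hom G H h
    using assms(1-3) unfolding group_hom_def group_hom_axioms_def by blast
  have "(h x, h y) \<in> twisted_rel H k" if x: "x \<in> carrier G" and y: "y \<in> carrier G" for x y
  proof -
    obtain g where g: "g \<in> carrier G" "y = g \<otimes>\<^bsub>G\<^esub> x \<otimes>\<^bsub>G\<^esub> inv\<^bsub>G\<^esub> (f g)"
      using total x y unfolding twisted_rel_def by blast
    have "f g \<in> carrier G"
      using \<open>f \<in> carrier G \<rightarrow> carrier G\<close> g(1) by (rule funcset_mem)
    then have "h y = h g \<otimes>\<^bsub>H\<^esub> h x \<otimes>\<^bsub>H\<^esub> inv\<^bsub>H\<^esub> (k (h g))"
      using g x by (simp add: intertwine)
    moreover have "h x \<in> carrier H" "h y \<in> carrier H" "h g \<in> carrier H"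
      using x y g(1) by simp_all
    ultimately show ?thesis
      unfolding twisted_rel_def by (intro CollectI case_prodI conjI bexI)
  qed
  then have "carrier H \<times> carrier H \<subseteq> twisted_rel H k"
    unfolding onto[symmetric] by fast
  moreover have "twisted_rel H k \<subseteq> carrier H \<times> carrier H"
    unfolding twisted_rel_def by fast
  ultimately show ?thesis
    by (rule equalityI[rotated])
qed

lemma not_top_R_infty_if_reidemeister_finite:
  assumes "f \<in> iso G G" "homeomorphic_map T T f" "reidemeister G f = enat n"
  shows "\<not> top_R_infty G T"
  using assms unfolding top_R_infty_def by auto

lemma homeomorphic_map_linear_inverse:
  fixes f g :: "'a::euclidean_space \<Rightarrow> 'a"
  assumes "linear f" "linear g" "\<And>x. g (f x) = x" "\<And>y. f (g y) = y"
    and "f ` S \<subseteq> S" "g ` S \<subseteq> S"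
  shows "homeomorphic_map (subtopology euclidean S) (subtopology euclidean S) f"
proof -
  have "homeomorphic_maps euclidean euclidean f g"
    using assms(1-4) by (simp add: homeomorphic_maps_def linear_continuous_on linear_linear)
  then have "homeomorphic_maps (subtopology euclidean S) (subtopology euclidean S) f g"
    by (rule homeomorphic_maps_subtopologies_alt) (use assms(5,6) in auto)
  then show ?thesis
    unfolding homeomorphic_map_maps by blast
qed

lemma matrix_vector_mult_uminus [algebra_simps]: "A *v (- x) = - (A *v (x :: real^'n))"
  using linear_neg[OF matrix_vector_mul_linear] .

lemma involution_one_minus_two_solve:
  fixes M :: "real^'n^'n" and v :: "real^'n"
  assumes "M ** M = mat 1"
  defines "a \<equiv> (-1/3) *\<^sub>R (v + 2 *\<^sub>R (M *v v))"
  shows "a - 2 *\<^sub>R (M *v a) = v"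
proof -
  have "M *v (M *v v) = v"
    using assms(1) by (simp add: matrix_vector_mul_assoc)
  then have "M *v a = (-1/3) *\<^sub>R (M *v v + 2 *\<^sub>R v)"
    unfolding a_def by (simp only: matrix_vector_mult_scaleR matrix_vector_right_distrib)
  then show ?thesis
    unfolding a_def by (simp add: vec_eq_iff algebra_simps)
qed

lemma num2_one_neq_two [simp]: "(1::2) \<noteq> 2" "(2::2) \<noteq> 1"
  by (simp_all add: eq_commute)

lemmas matrix_2_simps = vec_eq_iff forall_2 sum_2 matrix_matrix_mult_def matrix_vector_mult_def
  mat_def transpose_def

lemma rot_add: "rot s ** rot t = rot (s + t)"
  by (simp add: matrix_2_simps rot_def distrib_left cos_add sin_add algebra_simps)

lemma rot_mult_vec: "rot s *v (rot t *v x) = rot (s + t) *v x"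
  by (simp add: matrix_vector_mul_assoc rot_add)

lemma rot_eq_1_iff: "rot t = mat 1 \<longleftrightarrow> t \<in> \<int>"
proof
  assume "rot t = mat 1"
  then have "cos (2 * pi * t) = 1"
    by (simp add: matrix_2_simps rot_def)
  then obtain n :: int where "2 * pi * t = real_of_int n * 2 * pi"
    using cos_one_2pi_int by blast
  then show "t \<in> \<int>"
    by simp
qed (auto simp: Ints_def matrix_2_simps rot_def)

lemma rho_mult_rho: "rho ** rho = mat 1"
  by (simp add: matrix_2_simps rho_def)

lemma rho_conj_involutive: "rho ** (rho ** A ** rho) ** rho = A"
  by (simp add: matrix_2_simps rho_def)

lemma rho_conj_rot: "rho ** rot t ** rho = rot (- t)"
  by (simp add: matrix_2_simps rot_def rho_def)

lemma rho_mult_rot: "rho ** rot t = rot (- t) ** rho"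
  by (simp add: matrix_2_simps rot_def rho_def)

lemma rot_rho_involution: "(rot t ** rho) ** (rot t ** rho) = mat 1"
proof -
  have "(rot t ** rho) ** (rot t ** rho) = rot t ** (rho ** rot t) ** rho"
    by (simp add: matrix_mul_assoc)
  also have "\<dots> = (rot t ** rot (- t)) ** (rho ** rho)"
    by (simp add: rho_mult_rot matrix_mul_assoc)
  also have "\<dots> = mat 1"
    by (simp add: rot_add rho_mult_rho rot_eq_1_iff[THEN iffD2])
  finally show ?thesis .
qed

lemma rot_in_SO2: "rot t \<in> SO2"
  by (simp add: SO2_def orthogonal_matrix matrix_2_simps rot_def det_2 power2_eq_square[symmetric]
      algebra_simps)

lemma SO2_eq_range_rot: "SO2 = range rot"
proof (intro equalityI subsetI)
  fix A assume "A \<in> SO2"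
  then have orth: "transpose A ** A = mat 1" and det: "det A = 1"
    unfolding SO2_def orthogonal_matrix_def by simp_all
  define p q r w where "p = A$1$1" "q = A$1$2" "r = A$2$1" "w = A$2$2"
  have col: "p * p + r * r = 1" "p * q + r * w = 0"
    using orth unfolding p_q_r_w_def by (simp_all add: matrix_2_simps)
  have det2: "p * w - q * r = 1"
    using det by (simp add: det_2 p_q_r_w_def)
  have "q = q * (p * p + r * r)"
    using col(1) by simp
  also have "\<dots> = p * (p * q + r * w) - r * (p * w - q * r)"
    by (simp add: algebra_simps)
  also have "\<dots> = - r"
    by (simp only: col(2) det2)
  finally have "q = - r" .
  have "w = w * (p * p + r * r)"
    using col(1) by simp
  also have "\<dots> = p * (p * w - q * r) + r * (p * q + r * w)"
    by (simp add: algebra_simps \<open>q = - r\<close>)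
  also have "\<dots> = p"
    by (simp only: col(2) det2)
  finally have "w = p" .
  note \<open>q = - r\<close> \<open>w = p\<close>
  moreover obtain \<theta> where "p = cos \<theta>" "r = sin \<theta>"
    using sincos_total_2pi[of p r] col by (auto simp: power2_eq_square)
  ultimately have "A = rot (\<theta> / (2 * pi))"
    unfolding p_q_r_w_def by (simp add: matrix_2_simps rot_def)
  then show "A \<in> range rot"
    by blast
qed (auto simp: rot_in_SO2)

lemma rho_conj_in_SO2: "A \<in> SO2 \<Longrightarrow> rho ** A ** rho \<in> SO2"
  by (auto simp: SO2_eq_range_rot rho_conj_rot)

lemma RR2_simps [simp]:
  "carrier RR2 = UNIV" "\<one>\<^bsub>RR2\<^esub> = (0, 0)" "(t, x) \<otimes>\<^bsub>RR2\<^esub> (s, y) = (t + s, x + rot t *v y)"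
  by (simp_all add: RR2_def)

lemma group_RR2: "group RR2"
proof (rule groupI)
  fix a b c :: "real \<times> (real^2)"
  show "a \<otimes>\<^bsub>RR2\<^esub> b \<otimes>\<^bsub>RR2\<^esub> c = a \<otimes>\<^bsub>RR2\<^esub> (b \<otimes>\<^bsub>RR2\<^esub> c)"
    by (cases a; cases b; cases c) (simp add: matrix_vector_right_distrib rot_mult_vec algebra_simps)
  show "\<one>\<^bsub>RR2\<^esub> \<otimes>\<^bsub>RR2\<^esub> a = a"
    by (cases a) (simp add: rot_eq_1_iff[THEN iffD2])
  obtain t x where "a = (t, x)"
    by fastforce
  then show "\<exists>b\<in>carrier RR2. b \<otimes>\<^bsub>RR2\<^esub> a = \<one>\<^bsub>RR2\<^esub>"
    by (intro bexI[of _ "(- t, - (rot (- t) *v x))"]) (simp_all add: rot_mult_vec)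
qed auto

lemma inv_RR2: "inv\<^bsub>RR2\<^esub> (t, x) = (- t, - (rot (- t) *v x))"
  by (rule group.inv_equality[OF group_RR2]) (auto simp: rot_mult_vec rot_eq_1_iff[THEN iffD2])

lemma SO2R2_simps [simp]:
  "carrier SO2R2 = SO2 \<times> UNIV" "\<one>\<^bsub>SO2R2\<^esub> = (mat 1, 0)"
  "(A, x) \<otimes>\<^bsub>SO2R2\<^esub> (B, y) = (A ** B, x + A *v y)"
  by (simp_all add: SO2R2_def)

lemma group_SO2R2: "group SO2R2"
proof (rule groupI)
  fix a b c assume "a \<in> carrier SO2R2" "b \<in> carrier SO2R2" "c \<in> carrier SO2R2"
  then show "a \<otimes>\<^bsub>SO2R2\<^esub> b \<in> carrier SO2R2"
    by (cases a; cases b) (auto simp: SO2_eq_range_rot rot_add)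
  show "a \<otimes>\<^bsub>SO2R2\<^esub> b \<otimes>\<^bsub>SO2R2\<^esub> c = a \<otimes>\<^bsub>SO2R2\<^esub> (b \<otimes>\<^bsub>SO2R2\<^esub> c)"
    by (cases a; cases b; cases c)
      (simp add: matrix_vector_right_distrib matrix_mul_assoc matrix_vector_mul_assoc algebra_simps)
next
  show "\<one>\<^bsub>SO2R2\<^esub> \<in> carrier SO2R2"
    by (simp add: SO2_def orthogonal_matrix_id)
next
  fix a assume "a \<in> carrier SO2R2"
  then obtain t x where a: "a = (rot t, x)"
    by (auto simp: SO2_eq_range_rot)
  then show "\<one>\<^bsub>SO2R2\<^esub> \<otimes>\<^bsub>SO2R2\<^esub> a = a"
    by simp
  show "\<exists>b\<in>carrier SO2R2. b \<otimes>\<^bsub>SO2R2\<^esub> a = \<one>\<^bsub>SO2R2\<^esub>"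
    by (intro bexI[of _ "(rot (- t), - (rot (- t) *v x))"])
      (simp_all add: a rot_add rot_mult_vec rot_eq_1_iff[THEN iffD2] rot_in_SO2)
qed

lemma phi_Pair [simp]: "phi (t, x) = (- t, 2 *\<^sub>R (rho *v x))"
  by (simp add: phi_def)

lemma linear_phi: "linear phi"
  by (rule linearI) (auto simp: phi_def matrix_vector_right_distrib matrix_vector_mult_scaleR
      scaleR_right_distrib)

lemma phi_inverse:
  "phi ((\<lambda>(t, x). (- t, (1/2) *\<^sub>R (rho *v x))) p) = p"
  "(\<lambda>(t, x). (- t, (1/2) *\<^sub>R (rho *v x))) (phi p) = p"
  by (cases p; simp add: matrix_vector_mult_scaleR matrix_vector_mul_assoc rho_mult_rho)+

lemma hom_phi: "phi \<in> hom RR2 RR2"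
  by (auto simp: hom_def matrix_vector_right_distrib matrix_vector_mul_assoc rho_mult_rot
      matrix_vector_mult_scaleR scaleR_right_distrib)

lemma iso_phi: "phi \<in> iso RR2 RR2"
  by (rule isoI[OF hom_phi], rule bij_betwI[OF _ _ phi_inverse(2,1)]) auto

lemma homeomorphic_map_phi: "homeomorphic_map euclidean euclidean phi"
proof -
  have "linear (\<lambda>(t :: real, x :: real^2). (- t, (1/2) *\<^sub>R (rho *v x)))"
    by (rule linearI) (auto simp: matrix_vector_right_distrib matrix_vector_mult_scaleR
        scaleR_right_distrib)
  then have "homeomorphic_map (subtopology euclidean UNIV) (subtopology euclidean UNIV) phi"
    by (rule homeomorphic_map_linear_inverse[OF linear_phi _ phi_inverse(2,1)]) auto
  then show ?thesis
    by (simp only: subtopology_UNIV)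
qed

lemma twisted_conj_phi:
  "(t, a) \<otimes>\<^bsub>RR2\<^esub> (s, b) \<otimes>\<^bsub>RR2\<^esub> inv\<^bsub>RR2\<^esub> (phi (t, a))
     = (t + s + t, a + rot t *v b - 2 *\<^sub>R (rot (t + s + t) *v (rho *v a)))"
proof -
  have "inv\<^bsub>RR2\<^esub> (phi (t, a)) = (t, - (2 *\<^sub>R (rot t *v (rho *v a))))"
    by (simp add: inv_RR2 matrix_vector_mult_scaleR)
  then show ?thesis
    by (simp add: matrix_vector_mult_uminus matrix_vector_mult_scaleR rot_mult_vec add.assoc)
qed

lemma twisted_rel_phi_total: "twisted_rel RR2 phi = carrier RR2 \<times> carrier RR2"
proof -
  have "\<exists>g. (u, c) = g \<otimes>\<^bsub>RR2\<^esub> (s, b) \<otimes>\<^bsub>RR2\<^esub> inv\<^bsub>RR2\<^esub> (phi g)" for s b u c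
  proof -
    define t where "t = (u - s) / 2"
    define M where "M = rot u ** rho"
    define v where "v = c - rot t *v b"
    define a where "a = (-1/3) *\<^sub>R (v + 2 *\<^sub>R (M *v v))"
    have "a - 2 *\<^sub>R (M *v a) = v"
      unfolding a_def M_def by (rule involution_one_minus_two_solve[OF rot_rho_involution])
    then have "a + rot t *v b - 2 *\<^sub>R (rot u *v (rho *v a)) = c"
      unfolding M_def v_def matrix_vector_mul_assoc[symmetric] by (simp add: algebra_simps)
    moreover have "t + s + t = u"
      by (simp add: t_def field_simps)
    ultimately show ?thesis
      by (metis twisted_conj_phi)
  qed
  then show ?thesis
    by (auto simp: twisted_rel_def)
qed

lemma proj_hom: "proj \<in> hom RR2 SO2R2"
  by (auto simp: hom_def proj_def rot_in_SO2 rot_add)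

lemma proj_surj: "proj ` carrier RR2 = carrier SO2R2"
  by (force simp: proj_def SO2_eq_range_rot)

lemma center_RR2: "group_center RR2 = {(of_int k, 0) | k. True}"
proof (intro equalityI subsetI)
  fix z assume z: "z \<in> group_center RR2"
  obtain t x where zt: "z = (t, x)"
    by fastforce
  \<comment> \<open>Commuting with the half turn \<open>(1/2, 0)\<close> kills \<open>x\<close>, commuting with translations forces \<open>rot t = 1\<close>.\<close>
  have "z \<otimes>\<^bsub>RR2\<^esub> (1/2, 0) = (1/2, 0) \<otimes>\<^bsub>RR2\<^esub> z"
    using z by (simp add: group_center_def)
  then have "x = rot (1/2) *v x"
    by (simp add: zt)
  then have x: "x = 0"
    by (simp add: matrix_2_simps rot_def)
  have "z \<otimes>\<^bsub>RR2\<^esub> (0, e) = (0, e) \<otimes>\<^bsub>RR2\<^esub> z" for e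
    using z by (simp add: group_center_def)
  then have "rot t *v e = e" for e
    by (simp add: zt x)
  then have "rot t = mat 1"
    by (metis matrix_eq matrix_vector_mul_lid)
  then show "z \<in> {(of_int k, 0) | k. True}"
    using zt x by (auto simp: rot_eq_1_iff Ints_def)
next
  fix z assume "z \<in> {(of_int k :: real, 0 :: real^2) | k. True}"
  then show "z \<in> group_center RR2"
    by (auto simp: group_center_def rot_eq_1_iff[THEN iffD2])
qed

lemma kernel_proj: "kernel RR2 SO2R2 proj = group_center RR2"
  unfolding center_RR2 kernel_def by (auto simp: proj_def rot_eq_1_iff Ints_def)

definition phi1 :: "(real^2^2) \<times> (real^2) \<Rightarrow> (real^2^2) \<times> (real^2)" where
  "phi1 = (\<lambda>(A, x). (rho ** A ** rho, 2 *\<^sub>R (rho *v x)))"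

lemma phi1_proj: "phi1 (proj g) = proj (phi g)"
  by (cases g) (simp add: phi1_def proj_def rho_conj_rot)

lemma linear_rho_conj: "linear (\<lambda>(A :: real^2^2, x :: real^2). (rho ** A ** rho, c *\<^sub>R (rho *v x)))"
  by (rule linearI) (auto simp: matrix_2_simps algebra_simps)

lemma phi1_inverse:
  "phi1 ((\<lambda>(A, x). (rho ** A ** rho, (1/2) *\<^sub>R (rho *v x))) p) = p"
  "(\<lambda>(A, x). (rho ** A ** rho, (1/2) *\<^sub>R (rho *v x))) (phi1 p) = p"
  by (cases p; simp add: phi1_def rho_conj_involutive matrix_vector_mult_scaleR
      matrix_vector_mul_assoc rho_mult_rho)+

lemma phi1_closed: "phi1 ` carrier SO2R2 \<subseteq> carrier SO2R2"
  by (auto simp: phi1_def rho_conj_in_SO2)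

lemma iso_phi1: "phi1 \<in> iso SO2R2 SO2R2"
proof (rule isoI)
  show "phi1 \<in> hom SO2R2 SO2R2"
  proof (rule homI)
    fix a b assume "a \<in> carrier SO2R2" "b \<in> carrier SO2R2"
    then obtain g g' where ab: "a = proj g" "b = proj g'"
      unfolding proj_surj[symmetric] by blast
    have "phi1 (a \<otimes>\<^bsub>SO2R2\<^esub> b) = phi1 (proj (g \<otimes>\<^bsub>RR2\<^esub> g'))"
      by (simp add: ab hom_mult[OF proj_hom])
    also have "\<dots> = proj (phi g \<otimes>\<^bsub>RR2\<^esub> phi g')"
      by (simp add: phi1_proj hom_mult[OF hom_phi])
    also have "\<dots> = phi1 a \<otimes>\<^bsub>SO2R2\<^esub> phi1 b"
      by (simp add: ab phi1_proj hom_mult[OF proj_hom])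
    finally show "phi1 (a \<otimes>\<^bsub>SO2R2\<^esub> b) = phi1 a \<otimes>\<^bsub>SO2R2\<^esub> phi1 b" .
  qed (use phi1_closed in blast)
  show "bij_betw phi1 (carrier SO2R2) (carrier SO2R2)"
    by (rule bij_betwI[OF _ _ phi1_inverse(2,1)])
      (auto simp: phi1_def rho_conj_in_SO2)
qed

lemma homeomorphic_map_phi1:
  "homeomorphic_map (subtopology euclidean (carrier SO2R2)) (subtopology euclidean (carrier SO2R2)) phi1"
proof (rule homeomorphic_map_linear_inverse[OF _ linear_rho_conj phi1_inverse(2,1) phi1_closed])
  show "linear phi1"
    unfolding phi1_def by (rule linear_rho_conj)
qed (auto simp: rho_conj_in_SO2)

theorem mainTheorem15:
  shows "phi \<in> iso RR2 RR2
    \<and> homeomorphic_map euclidean euclidean phi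
    \<and> reidemeister RR2 phi = 1
    \<and> group_center RR2 = {(of_int k, 0) | k. True}
    \<and> proj \<in> hom RR2 SO2R2 \<and> proj ` carrier RR2 = carrier SO2R2
    \<and> kernel RR2 SO2R2 proj = group_center RR2
    \<and> (\<exists>phi1. phi1 \<in> iso SO2R2 SO2R2
          \<and> (\<forall>g \<in> carrier RR2. phi1 (proj g) = proj (phi g))
          \<and> homeomorphic_map (subtopology euclidean (carrier SO2R2))
                              (subtopology euclidean (carrier SO2R2)) phi1
          \<and> reidemeister SO2R2 phi1 = 1)
    \<and> \<not> top_R_infty RR2 euclidean
    \<and> \<not> top_R_infty SO2R2 (subtopology euclidean (carrier SO2R2))"
proof -
  have R_phi: "reidemeister RR2 phi = 1"
    by (rule reidemeister_eq_1_if_twisted_rel_total[OF group_RR2 twisted_rel_phi_total])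
  have "twisted_rel SO2R2 phi1 = carrier SO2R2 \<times> carrier SO2R2"
    by (rule twisted_rel_total_image[OF group_RR2 group_SO2R2 proj_hom proj_surj _ _
          twisted_rel_phi_total]) (simp_all add: phi1_proj)
  then have R_phi1: "reidemeister SO2R2 phi1 = 1"
    by (rule reidemeister_eq_1_if_twisted_rel_total[OF group_SO2R2])
  have not_R_infty_RR2: "\<not> top_R_infty RR2 euclidean"
    by (rule not_top_R_infty_if_reidemeister_finite[OF iso_phi homeomorphic_map_phi
          R_phi[unfolded one_enat_def]])
  have not_R_infty_SO2R2: "\<not> top_R_infty SO2R2 (subtopology euclidean (carrier SO2R2))"
    by (rule not_top_R_infty_if_reidemeister_finite[OF iso_phi1 homeomorphic_map_phi1
          R_phi1[unfolded one_enat_def]])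
  show ?thesis
    by (intro conjI exI[of _ phi1] ballI iso_phi homeomorphic_map_phi R_phi center_RR2 proj_hom
        proj_surj kernel_proj iso_phi1 phi1_proj homeomorphic_map_phi1 R_phi1
        not_R_infty_RR2 not_R_infty_SO2R2)
qed

end
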